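(* There exists a constant $c>0$ such that for every $n$ that is a perfect square there is a set $P$ of $n$ points in the plane such that every Hamiltonian path $\Pi$ of $P$ satisfies $W(\Pi)\ge c\sqrt{n}\cdot W(K_P)$, where $K_P$ is the complete Euclidean graph on $P$. That is, the Wiener index of any Hamiltonian path of $P$ is at least $\Theta(\sqrt{n})$ times the Wiener index of the complete Euclidean graph over $P$.
   Context: For a connected graph $G$ on vertex set $P$ whose edges $(p,q)$ have weight equal to the Euclidean distance $|pq|$, $\delta_G(p,q)$ denotes the weight of a shortest path between $p$ and $q$ in $G$, and the Wiener index is $W(G)=\sum_{\{p,q\}\subseteq P}\delta_G(p,q)$. The complete Euclidean graph $K_P$ has all edges between points of $P$, so $W(K_P)=\sum_{\{p,q\}\subseteq P}|pq|$. A Hamiltonian path of $P$ is a path with straight-line edges visiting every point of $P$ exactly once. *)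

theory Defs
  imports "HOL-Analysis.Analysis"
begin

type_synonym point = "real^2"

text \<open>A geometric graph on a point set is given by its (undirected) edge set E,
  a set of pairs of points; an edge (p,q) has weight dist p q.\<close>

definition is_walk :: "(point \<times> point) set \<Rightarrow> point \<Rightarrow> point \<Rightarrow> point list \<Rightarrow> bool" where
  "is_walk E p q ws \<longleftrightarrow> ws \<noteq> [] \<and> hd ws = p \<and> last ws = q \<and>
     (\<forall>i < length ws - 1. (ws ! i, ws ! Suc i) \<in> E \<or> (ws ! Suc i, ws ! i) \<in> E)"

definition walk_weight :: "point list \<Rightarrow> real" where
  "walk_weight ws = (\<Sum>i < length ws - 1. dist (ws ! i) (ws ! Suc i))"

definition sp_dist :: "(point \<times> point) set \<Rightarrow> point \<Rightarrow> point \<Rightarrow> real" where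
  "sp_dist E p q = Inf (walk_weight ` {ws. is_walk E p q ws})"

text \<open>Wiener index: sum over unordered pairs {p,q} of distinct vertices
  (each unordered pair counted once: ordered pairs halved; diagonal terms are 0).\<close>
definition wiener :: "point set \<Rightarrow> (point \<times> point) set \<Rightarrow> real" where
  "wiener V E = (\<Sum>p\<in>V. \<Sum>q\<in>V - {p}. sp_dist E p q) / 2"

definition complete_edges :: "point set \<Rightarrow> (point \<times> point) set" where
  "complete_edges P = {(p, q). p \<in> P \<and> q \<in> P \<and> p \<noteq> q}"

definition path_edges :: "point list \<Rightarrow> (point \<times> point) set" where
  "path_edges ps = {(ps ! i, ps ! Suc i) | i. Suc i < length ps}"

definition hamiltonian_path :: "point set \<Rightarrow> point list \<Rightarrow> bool" where
  "hamiltonian_path P ps \<longleftrightarrow> distinct ps \<and> set ps = P"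

end

theory Submission
  imports Defs
begin

text \<open>Take the \<open>k \<times> k\<close> integer grid, \<open>n = k\<^sup>2\<close>. Distinct grid points are at distance
  at least 1, so the position of a vertex along a Hamiltonian path, which changes by 1 across
  each path edge, is 1-Lipschitz along edges; hence the path distance between the \<open>i\<close>-th
  and \<open>j\<close>-th vertex is at least \<open>\<bar>i - j\<bar>\<close>, and summing gives \<open>W(\<Pi>) \<ge> (n\<^sup>3 - n)/6\<close>.
  In \<open>K\<^sub>P\<close> shortest paths are straight segments of length at most \<open>2k = 2\<surd>n\<close>, so
  \<open>W(K\<^sub>P) \<le> n(n - 1)\<surd>n\<close>, and \<open>c = 1/6\<close> works.\<close>

lemma walk_weight_nonneg: "0 \<le> walk_weight ws"
  unfolding walk_weight_def by (simp add: sum_nonneg)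

lemma sp_dist_le_walk_weight:
  assumes "is_walk E p q ws"
  shows "sp_dist E p q \<le> walk_weight ws"
  unfolding sp_dist_def
proof (rule cInf_lower)
  show "walk_weight ws \<in> walk_weight ` {ws. is_walk E p q ws}"
    using assms by blast
  show "bdd_below (walk_weight ` {ws. is_walk E p q ws})"
    by (rule bdd_belowI[where m = 0]) (auto simp: walk_weight_nonneg)
qed

lemma abs_diff_le_walk_weight:
  assumes lip: "\<And>a b. (a, b) \<in> E \<Longrightarrow> \<bar>\<phi> a - \<phi> b\<bar> \<le> dist a b"
    and walk: "is_walk E p q ws"
  shows "\<bar>\<phi> p - \<phi> q\<bar> \<le> walk_weight ws"
proof -
  let ?m = "length ws - 1"
  have p: "p = ws ! 0" and q: "q = ws ! ?m"
    and step: "\<And>i. i < ?m \<Longrightarrow> (ws ! i, ws ! Suc i) \<in> E \<or> (ws ! Suc i, ws ! i) \<in> E"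
    using walk unfolding is_walk_def by (auto simp: hd_conv_nth last_conv_nth)
  have "\<phi> p - \<phi> q = (\<Sum>i<?m. \<phi> (ws ! i) - \<phi> (ws ! Suc i))"
    using sum_lessThan_telescope'[of "\<lambda>i. \<phi> (ws ! i)" ?m] p q by simp
  then have "\<bar>\<phi> p - \<phi> q\<bar> \<le> (\<Sum>i<?m. \<bar>\<phi> (ws ! i) - \<phi> (ws ! Suc i)\<bar>)"
    by (metis sum_abs)
  also have "\<dots> \<le> (\<Sum>i<?m. dist (ws ! i) (ws ! Suc i))"
    using step lip by (intro sum_mono) (force simp: abs_minus_commute dist_commute)
  finally show ?thesis
    unfolding walk_weight_def .
qed

text \<open>The walk hypothesis matters: without any walk, \<^const>\<open>sp_dist\<close> is the unspecified
  \<open>Inf {}\<close>.\<close>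

lemma abs_diff_le_sp_dist:
  assumes "\<And>a b. (a, b) \<in> E \<Longrightarrow> \<bar>\<phi> a - \<phi> b\<bar> \<le> dist a b"
    and "is_walk E p q ws"
  shows "\<bar>\<phi> p - \<phi> q\<bar> \<le> sp_dist E p q"
  unfolding sp_dist_def
  using assms abs_diff_le_walk_weight[OF assms(1)] by (intro cInf_greatest) auto

lemma sp_dist_complete_edges:
  assumes "p \<in> P" "q \<in> P" "p \<noteq> q"
  shows "sp_dist (complete_edges P) p q = dist p q"
proof (rule antisym)
  have walk: "is_walk (complete_edges P) p q [p, q]"
    using assms unfolding is_walk_def complete_edges_def by auto
  then show "sp_dist (complete_edges P) p q \<le> dist p q"
    using sp_dist_le_walk_weight by (fastforce simp: walk_weight_def)
  have "\<bar>dist p p - dist p q\<bar> \<le> sp_dist (complete_edges P) p q"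
    by (rule abs_diff_le_sp_dist[OF _ walk]) (metis abs_dist_diff_le dist_commute)
  then show "dist p q \<le> sp_dist (complete_edges P) p q"
    by simp
qed

lemma is_walk_rev:
  assumes "is_walk E p q ws"
  shows "is_walk E q p (rev ws)"
proof -
  have step: "\<forall>i < length ws - 1. (ws ! i, ws ! Suc i) \<in> E \<or> (ws ! Suc i, ws ! i) \<in> E"
    using assms unfolding is_walk_def by blast
  have "(rev ws ! i, rev ws ! Suc i) \<in> E \<or> (rev ws ! Suc i, rev ws ! i) \<in> E"
    if i: "i < length ws - 1" for i
  proof -
    define j where "j = length ws - 2 - i"
    have "rev ws ! i = ws ! Suc j" "rev ws ! Suc i = ws ! j" "j < length ws - 1"
      using i by (simp_all add: rev_nth j_def Suc_diff_Suc numeral_2_eq_2)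
    then show ?thesis
      using step by auto
  qed
  then show ?thesis
    using assms unfolding is_walk_def by (simp add: hd_rev last_rev)
qed

lemma is_walk_path_edges_upt:
  assumes "i \<le> j" "j < length ps"
  shows "is_walk (path_edges ps) (ps ! i) (ps ! j) (map ((!) ps) [i..<Suc j])"
  using assms unfolding is_walk_def path_edges_def
  by (auto simp: hd_map last_map nth_append simp del: upt_Suc)

lemma ex_is_walk_path_edges:
  assumes "i < length ps" "j < length ps"
  shows "\<exists>ws. is_walk (path_edges ps) (ps ! i) (ps ! j) ws"
  using assms is_walk_path_edges_upt[of i j ps] is_walk_path_edges_upt[of j i ps] is_walk_rev
  by (cases "i \<le> j") fastforce+

definition position :: "'a list \<Rightarrow> 'a \<Rightarrow> nat" where
  "position ps = the_inv_into {..<length ps} ((!) ps)"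

lemma position_nth:
  assumes "distinct ps" "i < length ps"
  shows "position ps (ps ! i) = i"
  using assms unfolding position_def by (simp add: the_inv_into_f_f inj_on_nth)

lemma abs_position_diff_le_sp_dist:
  assumes "distinct ps"
    and sep: "\<And>x y. x \<in> set ps \<Longrightarrow> y \<in> set ps \<Longrightarrow> x \<noteq> y \<Longrightarrow> 1 \<le> dist x y"
    and "p \<in> set ps" "q \<in> set ps"
  shows "\<bar>real (position ps p) - real (position ps q)\<bar> \<le> sp_dist (path_edges ps) p q"
proof -
  obtain i j where "i < length ps" "j < length ps" "p = ps ! i" "q = ps ! j"
    using assms(3,4) by (auto simp: in_set_conv_nth)
  then obtain ws where walk: "is_walk (path_edges ps) p q ws"
    using ex_is_walk_path_edges by blast
  have "\<bar>real (position ps a) - real (position ps b)\<bar> \<le> dist a b"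
    if edge: "(a, b) \<in> path_edges ps" for a b
  proof -
    obtain t where t: "Suc t < length ps" "a = ps ! t" "b = ps ! Suc t"
      using edge unfolding path_edges_def by blast
    then have "a \<noteq> b"
      using \<open>distinct ps\<close> by (simp add: nth_eq_iff_index_eq)
    then show ?thesis
      using t sep \<open>distinct ps\<close> by (simp add: position_nth)
  qed
  then show ?thesis
    using walk by (rule abs_diff_le_sp_dist)
qed

lemma sum_abs_diff_lessThan_row:
  "(\<Sum>j<n. \<bar>real n - real j\<bar>) = real n * (real n + 1) / 2"
proof -
  have "(\<Sum>j<n. \<bar>real n - real j\<bar>) = (\<Sum>j<n. real n - real j)"
    by (rule sum.cong) auto
  also have "\<dots> = real n * real n - (\<Sum>j<n. real j)"
    by (simp add: sum_subtractf)
  also have "(\<Sum>j<n. real j) = real n * (real n - 1) / 2"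
    by (induction n) (auto simp: field_simps)
  finally show ?thesis
    by (simp add: field_simps)
qed

lemma sum_abs_diff_lessThan:
  "(\<Sum>i<n. \<Sum>j<n. \<bar>real i - real j\<bar>) = (real n ^ 3 - real n) / 3"
proof (induction n)
  case (Suc n)
  have "(\<Sum>i<Suc n. \<Sum>j<Suc n. \<bar>real i - real j\<bar>)
      = (\<Sum>i<n. \<Sum>j<n. \<bar>real i - real j\<bar>) + 2 * (\<Sum>j<n. \<bar>real n - real j\<bar>)"
    by (simp add: sum.distrib abs_minus_commute)
  then show ?case
    using Suc sum_abs_diff_lessThan_row[of n] by (simp add: field_simps power3_eq_cube)
qed simp

lemma wiener_path_edges_ge:
  assumes ham: "hamiltonian_path P ps"
    and sep: "\<And>x y. x \<in> P \<Longrightarrow> y \<in> P \<Longrightarrow> x \<noteq> y \<Longrightarrow> 1 \<le> dist x y"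
  shows "(real (card P) ^ 3 - real (card P)) / 6 \<le> wiener P (path_edges ps)"
proof -
  let ?n = "length ps"
  let ?pos = "\<lambda>x. real (position ps x)"
  have dist: "distinct ps" and P: "P = set ps"
    using ham unfolding hamiltonian_path_def by auto
  have n: "card P = ?n"
    using P dist by (simp add: distinct_card)
  have P_nth: "P = (!) ps ` {..<?n}" and inj: "inj_on ((!) ps) {..<?n}"
    using P dist by (auto simp: inj_on_nth lessThan_atLeast0 nth_image)
  have "(real ?n ^ 3 - real ?n) / 3 = (\<Sum>i<?n. \<Sum>j<?n. \<bar>real i - real j\<bar>)"
    by (rule sum_abs_diff_lessThan[symmetric])
  also have "\<dots> = (\<Sum>p\<in>P. \<Sum>q\<in>P. \<bar>?pos p - ?pos q\<bar>)"
    unfolding P_nth by (simp add: sum.reindex[OF inj] position_nth[OF dist])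
  also have "\<dots> = (\<Sum>p\<in>P. \<Sum>q\<in>P - {p}. \<bar>?pos p - ?pos q\<bar>)"
    by (simp add: P sum_diff1)
  also have "\<dots> \<le> (\<Sum>p\<in>P. \<Sum>q\<in>P - {p}. sp_dist (path_edges ps) p q)"
    using abs_position_diff_le_sp_dist[OF dist] sep P by (intro sum_mono) auto
  finally show ?thesis
    unfolding wiener_def n by simp
qed

lemma wiener_complete_edges_le:
  assumes "finite P" and diam: "\<And>p q. p \<in> P \<Longrightarrow> q \<in> P \<Longrightarrow> dist p q \<le> D"
  shows "wiener P (complete_edges P) \<le> real (card P) * (real (card P) - 1) / 2 * D"
proof -
  have row: "(\<Sum>q\<in>P - {p}. sp_dist (complete_edges P) p q) \<le> (real (card P) - 1) * D"
    if "p \<in> P" for p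
  proof -
    have "(\<Sum>q\<in>P - {p}. sp_dist (complete_edges P) p q) \<le> real (card (P - {p})) * D"
      using that diam by (intro sum_bounded_above) (auto simp: sp_dist_complete_edges)
    also have "real (card (P - {p})) = real (card P) - 1"
      using that \<open>finite P\<close> card_gt_0_iff[of P] by (auto simp: Suc_le_eq)
    finally show ?thesis .
  qed
  have "(\<Sum>p\<in>P. \<Sum>q\<in>P - {p}. sp_dist (complete_edges P) p q)
      \<le> real (card P) * ((real (card P) - 1) * D)"
    using sum_mono[of P _ "\<lambda>_. (real (card P) - 1) * D"] row by simp
  then show ?thesis
    unfolding wiener_def by simp
qed

definition grid :: "nat \<Rightarrow> point set" where
  "grid k = (\<lambda>(a, b). vector [real a, real b]) ` ({..<k} \<times> {..<k})"

lemma finite_grid: "finite (grid k)"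
  unfolding grid_def by simp

lemma card_grid: "card (grid k) = k\<^sup>2"
proof -
  have "inj_on (\<lambda>(a, b). vector [real a, real b] :: point) ({..<k} \<times> {..<k})"
  proof (rule inj_onI, clarsimp)
    fix a b a' b' :: nat
    assume "(vector [real a, real b] :: point) = vector [real a', real b']"
    then have "(vector [real a, real b] :: point) $ 1 = (vector [real a', real b'] :: point) $ 1"
      "(vector [real a, real b] :: point) $ 2 = (vector [real a', real b'] :: point) $ 2"
      by simp_all
    then show "a = a' \<and> b = b'"
      by simp
  qed
  then show ?thesis
    unfolding grid_def by (simp add: card_image power2_eq_square)
qed

lemma grid_dist_ge_1:
  assumes "x \<in> grid k" "y \<in> grid k" "x \<noteq> y"
  shows "1 \<le> dist x y"
proof -
  obtain a b a' b' :: nat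
    where x: "x = vector [real a, real b]" and y: "y = vector [real a', real b']"
    using assms unfolding grid_def by auto
  have "\<bar>(x - y) $ 1\<bar> \<le> dist x y" "\<bar>(x - y) $ 2\<bar> \<le> dist x y"
    unfolding dist_norm by (rule component_le_norm_cart)+
  moreover have "a \<noteq> a' \<or> b \<noteq> b'"
    using assms x y by auto
  ultimately show ?thesis
    using x y by auto
qed

lemma grid_dist_le:
  assumes "x \<in> grid k" "y \<in> grid k"
  shows "dist x y \<le> 2 * real k"
proof -
  obtain a b a' b' :: nat
    where x: "x = vector [real a, real b]" and y: "y = vector [real a', real b']"
      and "a < k" "b < k" "a' < k" "b' < k"
    using assms unfolding grid_def by auto
  have "dist x y \<le> \<bar>(x - y) $ 1\<bar> + \<bar>(x - y) $ 2\<bar>"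
    using norm_le_l1_cart[of "x - y"] by (simp add: dist_norm sum_2)
  also have "\<dots> \<le> 2 * real k"
    using x y \<open>a < k\<close> \<open>b < k\<close> \<open>a' < k\<close> \<open>b' < k\<close> by simp
  finally show ?thesis .
qed

lemma wiener_grid_path_edges_ge:
  assumes ham: "hamiltonian_path (grid k) ps"
  shows "real k / 6 * wiener (grid k) (complete_edges (grid k)) \<le> wiener (grid k) (path_edges ps)"
proof -
  let ?m = "real (k\<^sup>2)"
  have "wiener (grid k) (complete_edges (grid k)) \<le> ?m * (?m - 1) / 2 * (2 * real k)"
    using wiener_complete_edges_le[OF finite_grid grid_dist_le] by (simp add: card_grid)
  then have "real k / 6 * wiener (grid k) (complete_edges (grid k))
      \<le> real k / 6 * (?m * (?m - 1) / 2 * (2 * real k))"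
    by (intro mult_left_mono) auto
  also have "\<dots> = ?m * ?m * (?m - 1) / 6"
    by (simp add: power2_eq_square)
  also have "\<dots> \<le> (?m ^ 3 - ?m) / 6"
    using le_square[of "k\<^sup>2", folded of_nat_le_iff[where 'a = real]]
    by (intro divide_right_mono) (simp_all add: power3_eq_cube algebra_simps)
  also have "\<dots> \<le> wiener (grid k) (path_edges ps)"
    using wiener_path_edges_ge[OF ham grid_dist_ge_1] by (simp add: card_grid)
  finally show ?thesis .
qed

theorem theorem6:
  "\<exists>c::real. c > 0 \<and>
     (\<forall>n::nat. (\<exists>k::nat. n = k\<^sup>2) \<longrightarrow>
        (\<exists>P :: point set. finite P \<and> card P = n \<and>
           (\<forall>ps. hamiltonian_path P ps \<longrightarrow>
              wiener P (path_edges ps) \<ge> c * sqrt (real n) * wiener P (complete_edges P))))"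
proof (intro exI[of _ "1 / 6"] conjI allI impI)
  fix n :: nat
  assume "\<exists>k. n = k\<^sup>2"
  then obtain k where n: "n = k\<^sup>2"
    by blast
  then have "sqrt (real n) = real k"
    by simp
  then show "\<exists>P. finite P \<and> card P = n \<and> (\<forall>ps. hamiltonian_path P ps \<longrightarrow>
      1 / 6 * sqrt (real n) * wiener P (complete_edges P) \<le> wiener P (path_edges ps))"
    using finite_grid card_grid wiener_grid_path_edges_ge n by (intro exI[of _ "grid k"]) auto
qed simp

end
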